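(* Let $G_1=(V_1,E_1)$ and $G_2=(V_2,E_2)$ be finite simple directed graphs (edges are ordered pairs of distinct vertices, written $ij$ for $(i,j)$). Consider binary vectors $\mathbf{x}=(x_{i,k})_{(i,k)\in V_1\times V_2}$, $\mathbf{y}=(y_{ij,kl})_{(ij,kl)\in E_1\times E_2}$, $\mathbf{u}=(u_i)_{i\in V_1}$, $\mathbf{v}=(v_k)_{k\in V_2}$, $\mathbf{e}=(e_{ij})_{ij\in E_1}$, $\mathbf{f}=(f_{kl})_{kl\in E_2}$, all with entries in $\{0,1\}$. Consider the constraints (C1) $u_i+\sum_{k\in V_2}x_{i,k}=1$ for all $i\in V_1$; (C2) $v_k+\sum_{i\in V_1}x_{i,k}=1$ for all $k\in V_2$; (C3) $e_{ij}+\sum_{kl\in E_2}y_{ij,kl}=1$ for all $ij\in E_1$; (C4) $f_{kl}+\sum_{ij\in E_1}y_{ij,kl}=1$ for all $kl\in E_2$; (C5) $y_{ij,kl}\le x_{i,k}$ for all $(ij,kl)\in E_1\times E_2$; (C6) $y_{ij,kl}\le x_{j,l}$ for all $(ij,kl)\in E_1\times E_2$; (C7) $\sum_{l\in V_2:\,kl\in E_2}y_{ij,kl}\le x_{i,k}$ for all $k\in V_2$ and all $ij\in E_1$; (C8) $\sum_{k\in V_2:\,kl\in E_2}y_{ij,kl}\le x_{j,l}$ for all $l\in V_2$ and all $ij\in E_1$. Let $\Gamma_1$ be the set of binary 6-tuples $(\mathbf{x},\mathbf{y},\mathbf{u},\mathbf{v},\mathbf{e},\mathbf{f})$ satisfying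 (C1)–(C6), and $\Gamma_2$ the set of binary 6-tuples satisfying (C1)–(C4), (C7) and (C8). Then $\Gamma_1=\Gamma_2$.
   Context: The variables encode an edit path: $x_{i,k}=1$ iff vertex $i$ is substituted with $k$, $y_{ij,kl}=1$ iff edge $ij$ is substituted with $kl$, $u_i$/$e_{ij}$ indicate deletion of vertex $i$/edge $ij$ from $G_1$, and $v_k$/$f_{kl}$ indicate insertion of vertex $k$/edge $kl$ of $G_2$. *)

theory Defs
  imports Main
begin

definition simple_digraph :: "'a set \<Rightarrow> ('a \<times> 'a) set \<Rightarrow> bool" where
  "simple_digraph V E \<longleftrightarrow> finite V \<and> E \<subseteq> V \<times> V \<and> (\<forall>(i,j)\<in>E. i \<noteq> j)"

type_synonym ('a,'b) edit_tuple =
  "(('a \<times> 'b) \<Rightarrow> nat) \<times> ((('a \<times> 'a) \<times> ('b \<times> 'b)) \<Rightarrow> nat) \<times> ('a \<Rightarrow> nat) \<times> ('b \<Rightarrow> nat)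
   \<times> (('a \<times> 'a) \<Rightarrow> nat) \<times> (('b \<times> 'b) \<Rightarrow> nat)"

definition binary_tuple :: "'a set \<Rightarrow> ('a \<times> 'a) set \<Rightarrow> 'b set \<Rightarrow> ('b \<times> 'b) set \<Rightarrow> ('a,'b) edit_tuple \<Rightarrow> bool" where
  "binary_tuple V1 E1 V2 E2 t = (case t of (x, y, u, v, e, f) \<Rightarrow>
     (\<forall>p\<in>V1 \<times> V2. x p \<in> {0,1}) \<and> (\<forall>q\<in>E1 \<times> E2. y q \<in> {0,1}) \<and>
     (\<forall>i\<in>V1. u i \<in> {0,1}) \<and> (\<forall>k\<in>V2. v k \<in> {0,1}) \<and>
     (\<forall>a\<in>E1. e a \<in> {0,1}) \<and> (\<forall>b\<in>E2. f b \<in> {0,1}))"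

definition C1to4 :: "'a set \<Rightarrow> ('a \<times> 'a) set \<Rightarrow> 'b set \<Rightarrow> ('b \<times> 'b) set \<Rightarrow> ('a,'b) edit_tuple \<Rightarrow> bool" where
  "C1to4 V1 E1 V2 E2 t = (case t of (x, y, u, v, e, f) \<Rightarrow>
     (\<forall>i\<in>V1. u i + (\<Sum>k\<in>V2. x (i,k)) = 1) \<and>
     (\<forall>k\<in>V2. v k + (\<Sum>i\<in>V1. x (i,k)) = 1) \<and>
     (\<forall>ij\<in>E1. e ij + (\<Sum>kl\<in>E2. y (ij,kl)) = 1) \<and>
     (\<forall>kl\<in>E2. f kl + (\<Sum>ij\<in>E1. y (ij,kl)) = 1))"

definition C5C6 :: "'a set \<Rightarrow> ('a \<times> 'a) set \<Rightarrow> 'b set \<Rightarrow> ('b \<times> 'b) set \<Rightarrow> ('a,'b) edit_tuple \<Rightarrow> bool" where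
  "C5C6 V1 E1 V2 E2 t = (case t of (x, y, u, v, e, f) \<Rightarrow>
     (\<forall>(i,j)\<in>E1. \<forall>(k,l)\<in>E2. y ((i,j),(k,l)) \<le> x (i,k)) \<and>
     (\<forall>(i,j)\<in>E1. \<forall>(k,l)\<in>E2. y ((i,j),(k,l)) \<le> x (j,l)))"

definition C7C8 :: "'a set \<Rightarrow> ('a \<times> 'a) set \<Rightarrow> 'b set \<Rightarrow> ('b \<times> 'b) set \<Rightarrow> ('a,'b) edit_tuple \<Rightarrow> bool" where
  "C7C8 V1 E1 V2 E2 t = (case t of (x, y, u, v, e, f) \<Rightarrow>
     (\<forall>k\<in>V2. \<forall>(i,j)\<in>E1. (\<Sum>l\<in>{l\<in>V2. (k,l)\<in>E2}. y ((i,j),(k,l))) \<le> x (i,k)) \<and>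
     (\<forall>l\<in>V2. \<forall>(i,j)\<in>E1. (\<Sum>k\<in>{k\<in>V2. (k,l)\<in>E2}. y ((i,j),(k,l))) \<le> x (j,l)))"

definition Gamma1 :: "'a set \<Rightarrow> ('a \<times> 'a) set \<Rightarrow> 'b set \<Rightarrow> ('b \<times> 'b) set \<Rightarrow> ('a,'b) edit_tuple set" where
  "Gamma1 V1 E1 V2 E2 = {t. binary_tuple V1 E1 V2 E2 t \<and> C1to4 V1 E1 V2 E2 t \<and> C5C6 V1 E1 V2 E2 t}"

definition Gamma2 :: "'a set \<Rightarrow> ('a \<times> 'a) set \<Rightarrow> 'b set \<Rightarrow> ('b \<times> 'b) set \<Rightarrow> ('a,'b) edit_tuple set" where
  "Gamma2 V1 E1 V2 E2 = {t. binary_tuple V1 E1 V2 E2 t \<and> C1to4 V1 E1 V2 E2 t \<and> C7C8 V1 E1 V2 E2 t}"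

end

theory Submission
  imports Defs
begin

text \<open>Both directions only use that the y-row of an edge ij of G1 sums to at most 1, which is
  constraint (C3): in (C7)/(C8) a row-sum over the out- (or in-) edges of a vertex of G2 is then
  either 0 or a single term, so it is bounded by x exactly when each of its terms is, which is
  (C5)/(C6).\<close>

lemma sum_le_bound_of_sum_le_one:
  fixes g :: "'c \<Rightarrow> nat"
  assumes "sum g A \<le> 1" and "\<And>a. a \<in> A \<Longrightarrow> g a \<le> c"
  shows "sum g A \<le> c"
proof (cases "sum g A = 0")
  case False
  then obtain a where "a \<in> A" "g a \<noteq> 0" by (meson sum.neutral)
  with assms show ?thesis by fastforce
qed simp

lemma sum_out_edges_le_sum_edges:
  fixes g :: "'b \<times> 'b \<Rightarrow> nat"
  assumes "finite E"
  shows "(\<Sum>l\<in>{l\<in>V. (k,l)\<in>E}. g (k,l)) \<le> sum g E"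
proof -
  have "(\<Sum>l\<in>{l\<in>V. (k,l)\<in>E}. g (k,l)) = sum g (Pair k ` {l\<in>V. (k,l)\<in>E})"
    by (simp add: sum.reindex inj_on_def)
  also have "\<dots> \<le> sum g E" using assms by (intro sum_mono2) auto
  finally show ?thesis .
qed

lemma sum_in_edges_le_sum_edges:
  fixes g :: "'b \<times> 'b \<Rightarrow> nat"
  assumes "finite E"
  shows "(\<Sum>k\<in>{k\<in>V. (k,l)\<in>E}. g (k,l)) \<le> sum g E"
proof -
  have "(\<Sum>k\<in>{k\<in>V. (k,l)\<in>E}. g (k,l)) = sum g ((\<lambda>k. (k,l)) ` {k\<in>V. (k,l)\<in>E})"
    by (simp add: sum.reindex inj_on_def)
  also have "\<dots> \<le> sum g E" using assms by (intro sum_mono2) auto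
  finally show ?thesis .
qed

lemma C5C6_imp_C7C8:
  assumes "finite E2" and "C1to4 V1 E1 V2 E2 (x, y, u, v, e, f)"
    and "C5C6 V1 E1 V2 E2 (x, y, u, v, e, f)"
  shows "C7C8 V1 E1 V2 E2 (x, y, u, v, e, f)"
proof -
  have row: "(\<Sum>kl\<in>E2. y ((i,j),kl)) \<le> 1" if "(i,j) \<in> E1" for i j
    using assms(2) that unfolding C1to4_def by force
  have out: "(\<Sum>l\<in>{l\<in>V2. (k,l)\<in>E2}. y ((i,j),(k,l))) \<le> x (i,k)" if "(i,j) \<in> E1" for i j k
  proof (rule sum_le_bound_of_sum_le_one)
    show "(\<Sum>l\<in>{l\<in>V2. (k,l)\<in>E2}. y ((i,j),(k,l))) \<le> 1"
      using order_trans[OF sum_out_edges_le_sum_edges[OF assms(1)] row[OF that]] .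
    show "y ((i,j),(k,l)) \<le> x (i,k)" if "l \<in> {l\<in>V2. (k,l)\<in>E2}" for l
      using assms(3) \<open>(i,j) \<in> E1\<close> that unfolding C5C6_def by fastforce
  qed
  have into: "(\<Sum>k\<in>{k\<in>V2. (k,l)\<in>E2}. y ((i,j),(k,l))) \<le> x (j,l)" if "(i,j) \<in> E1" for i j l
  proof (rule sum_le_bound_of_sum_le_one)
    show "(\<Sum>k\<in>{k\<in>V2. (k,l)\<in>E2}. y ((i,j),(k,l))) \<le> 1"
      using order_trans[OF sum_in_edges_le_sum_edges[OF assms(1)] row[OF that]] .
    show "y ((i,j),(k,l)) \<le> x (j,l)" if "k \<in> {k\<in>V2. (k,l)\<in>E2}" for k
      using assms(3) \<open>(i,j) \<in> E1\<close> that unfolding C5C6_def by fastforce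
  qed
  show ?thesis unfolding C7C8_def using out into by auto
qed

lemma C7C8_imp_C5C6:
  assumes "finite V2" and "E2 \<subseteq> V2 \<times> V2" and "C7C8 V1 E1 V2 E2 (x, y, u, v, e, f)"
  shows "C5C6 V1 E1 V2 E2 (x, y, u, v, e, f)"
proof -
  have "y ((i,j),(k,l)) \<le> x (i,k) \<and> y ((i,j),(k,l)) \<le> x (j,l)"
    if ij: "(i,j) \<in> E1" and kl: "(k,l) \<in> E2" for i j k l
  proof
    have k: "k \<in> V2" and l: "l \<in> V2" using kl assms(2) by auto
    have "y ((i,j),(k,l)) \<le> (\<Sum>l'\<in>{l'\<in>V2. (k,l')\<in>E2}. y ((i,j),(k,l')))"
      using assms(1) l kl by (intro member_le_sum) auto
    also have "\<dots> \<le> x (i,k)" using assms(3) k ij unfolding C7C8_def by auto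
    finally show "y ((i,j),(k,l)) \<le> x (i,k)" .
    have "y ((i,j),(k,l)) \<le> (\<Sum>k'\<in>{k'\<in>V2. (k',l)\<in>E2}. y ((i,j),(k',l)))"
      using assms(1) k kl by (intro member_le_sum) auto
    also have "\<dots> \<le> x (j,l)" using assms(3) l ij unfolding C7C8_def by auto
    finally show "y ((i,j),(k,l)) \<le> x (j,l)" .
  qed
  then show ?thesis unfolding C5C6_def by auto
qed

theorem proposition2:
  fixes V1 :: "'a set" and E1 :: "('a \<times> 'a) set" and V2 :: "'b set" and E2 :: "('b \<times> 'b) set"
  assumes "simple_digraph V1 E1" and "simple_digraph V2 E2"
  shows "Gamma1 V1 E1 V2 E2 = Gamma2 V1 E1 V2 E2"
proof -
  have V2: "finite V2" "E2 \<subseteq> V2 \<times> V2" using assms(2) by (auto simp: simple_digraph_def)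
  then have E2: "finite E2" by (meson finite_SigmaI finite_subset)
  have "C5C6 V1 E1 V2 E2 t \<longleftrightarrow> C7C8 V1 E1 V2 E2 t" if "C1to4 V1 E1 V2 E2 t" for t
    using that C5C6_imp_C7C8[OF E2] C7C8_imp_C5C6[OF V2] by (cases t) blast
  then show ?thesis unfolding Gamma1_def Gamma2_def by blast
qed

end
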